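(* Let $(U,\tau_R,\rho)$ be a general ordered topological approximation space and $A\subseteq U$. Then $\underline{R}_{Inc}(A)\subseteq\underline{\alpha}_{Inc}(A)\subseteq\underline{S}_{Inc}(A)$ and $\underline{R}_{Dec}(A)\subseteq\underline{\alpha}_{Dec}(A)\subseteq\underline{S}_{Dec}(A)$.
   Context: A general ordered topological approximation space (GOTAS) is a triple $(U,\tau_R,\rho)$ where $U$ is a non-empty set, $R$ is a binary relation on $U$, $\tau_R$ is a topology on $U$ generated by $R$, and $\rho$ is a partial order on $U$. A subset $A\subseteq U$ is increasing (resp. decreasing) if whenever $a\in A$, $x\in U$ and $a\,\rho\,x$ (resp. $x\,\rho\,a$), then $x\in A$. For $A\subseteq U$: $\underline{R}_{Inc}(A)$ is the greatest subset of $A$ that is both $\tau_R$-open and increasing; $\underline{R}_{Dec}(A)$ is the greatest subset of $A$ that is $\tau_R$-open and decreasing; $\overline{R}^{Inc}(A)$ is the smallest superset of $A$ that is $\tau_R$-closed and increasing; $\overline{R}^{Dec}(A)$ is the smallest superset of $A$ that is $\tau_R$-closed and decreasing. Define $\underline{\alpha}_{Inc}(A)=A\cap\underline{R}_{Inc}(\overline{R}^{Inc}(\underline{R}_{Inc}(A)))$, $\underline{\alpha}_{Dec}(A)=A\cap\underline{R}_{Dec}(\overline{R}^{Dec}(\underline{R}_{Dec}(A)))$, $\underline{S}_{Inc}(A)=A\cap\overline{R}^{Inc}(\underline{R}_{Inc}(A))$, $\underline{S}_{Dec}(A)=A\cap\overline{R}^{Dec}(\underline{R}_{Dec}(A))$.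 *)

theory Defs
  imports "HOL-Analysis.Analysis"
begin

text \<open>Topology on U generated by a binary relation R: subbase consisting of the
  after-sets (right neighbourhoods) xR = R``{x} for x in U, together with U itself
  (so that the carrier of the topology is exactly U).\<close>
definition tau_R :: "'a set \<Rightarrow> ('a \<times> 'a) set \<Rightarrow> 'a topology" where
  "tau_R U R = topology_generated_by (insert U {R `` {x} | x. x \<in> U})"

definition increasing_in :: "'a set \<Rightarrow> ('a \<times> 'a) set \<Rightarrow> 'a set \<Rightarrow> bool" where
  "increasing_in U \<rho> A \<longleftrightarrow> (\<forall>a x. a \<in> A \<and> x \<in> U \<and> (a, x) \<in> \<rho> \<longrightarrow> x \<in> A)"

definition decreasing_in :: "'a set \<Rightarrow> ('a \<times> 'a) set \<Rightarrow> 'a set \<Rightarrow> bool" where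
  "decreasing_in U \<rho> A \<longleftrightarrow> (\<forall>a x. a \<in> A \<and> x \<in> U \<and> (x, a) \<in> \<rho> \<longrightarrow> x \<in> A)"

definition lowerInc :: "'a set \<Rightarrow> ('a \<times> 'a) set \<Rightarrow> ('a \<times> 'a) set \<Rightarrow> 'a set \<Rightarrow> 'a set" where
  "lowerInc U R \<rho> A = \<Union>{G. G \<subseteq> A \<and> openin (tau_R U R) G \<and> increasing_in U \<rho> G}"

definition lowerDec :: "'a set \<Rightarrow> ('a \<times> 'a) set \<Rightarrow> ('a \<times> 'a) set \<Rightarrow> 'a set \<Rightarrow> 'a set" where
  "lowerDec U R \<rho> A = \<Union>{G. G \<subseteq> A \<and> openin (tau_R U R) G \<and> decreasing_in U \<rho> G}"

definition upperInc :: "'a set \<Rightarrow> ('a \<times> 'a) set \<Rightarrow> ('a \<times> 'a) set \<Rightarrow> 'a set \<Rightarrow> 'a set" where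
  "upperInc U R \<rho> A = \<Inter>{F. A \<subseteq> F \<and> closedin (tau_R U R) F \<and> increasing_in U \<rho> F}"

definition upperDec :: "'a set \<Rightarrow> ('a \<times> 'a) set \<Rightarrow> ('a \<times> 'a) set \<Rightarrow> 'a set \<Rightarrow> 'a set" where
  "upperDec U R \<rho> A = \<Inter>{F. A \<subseteq> F \<and> closedin (tau_R U R) F \<and> decreasing_in U \<rho> F}"

definition alphaInc where
  "alphaInc U R \<rho> A = A \<inter> lowerInc U R \<rho> (upperInc U R \<rho> (lowerInc U R \<rho> A))"
definition alphaDec where
  "alphaDec U R \<rho> A = A \<inter> lowerDec U R \<rho> (upperDec U R \<rho> (lowerDec U R \<rho> A))"
definition SInc where
  "SInc U R \<rho> A = A \<inter> upperInc U R \<rho> (lowerInc U R \<rho> A)"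
definition SDec where
  "SDec U R \<rho> A = A \<inter> upperDec U R \<rho> (lowerDec U R \<rho> A)"

definition GOTAS :: "'a set \<Rightarrow> ('a \<times> 'a) set \<Rightarrow> ('a \<times> 'a) set \<Rightarrow> bool" where
  "GOTAS U R \<rho> \<longleftrightarrow> U \<noteq> {} \<and> R \<subseteq> U \<times> U \<and> \<rho> \<subseteq> U \<times> U \<and> partial_order_on U \<rho>"

end

theory Submission
  imports Defs
begin

text \<open>The lower approximation \<open>L = lowerInc A\<close> is open, increasing and contained
  in its closed increasing hull \<open>upperInc L\<close>, so by maximality it lies in
  \<open>lowerInc (upperInc L)\<close>, hence in \<open>alphaInc A\<close>; and \<open>alphaInc A \<subseteq> SInc A\<close>
  because \<open>lowerInc\<close> shrinks \<open>upperInc L\<close>.\<close>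

lemma lowerInc_subset: "lowerInc U R \<rho> X \<subseteq> X"
  unfolding lowerInc_def by blast

lemma lowerDec_subset: "lowerDec U R \<rho> X \<subseteq> X"
  unfolding lowerDec_def by blast

lemma upperInc_superset: "X \<subseteq> upperInc U R \<rho> X"
  unfolding upperInc_def by blast

lemma upperDec_superset: "X \<subseteq> upperDec U R \<rho> X"
  unfolding upperDec_def by blast

lemma openin_lowerInc: "openin (tau_R U R) (lowerInc U R \<rho> X)"
  unfolding lowerInc_def by (rule openin_Union) blast

lemma openin_lowerDec: "openin (tau_R U R) (lowerDec U R \<rho> X)"
  unfolding lowerDec_def by (rule openin_Union) blast

lemma increasing_lowerInc: "increasing_in U \<rho> (lowerInc U R \<rho> X)"
  unfolding lowerInc_def increasing_in_def by blast

lemma decreasing_lowerDec: "decreasing_in U \<rho> (lowerDec U R \<rho> X)"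
  unfolding lowerDec_def decreasing_in_def by blast

lemma lowerInc_maximal:
  assumes "G \<subseteq> X" "openin (tau_R U R) G" "increasing_in U \<rho> G"
  shows "G \<subseteq> lowerInc U R \<rho> X"
  using assms unfolding lowerInc_def by blast

lemma lowerDec_maximal:
  assumes "G \<subseteq> X" "openin (tau_R U R) G" "decreasing_in U \<rho> G"
  shows "G \<subseteq> lowerDec U R \<rho> X"
  using assms unfolding lowerDec_def by blast

lemma lowerInc_subset_alphaInc: "lowerInc U R \<rho> A \<subseteq> alphaInc U R \<rho> A"
proof -
  let ?L = "lowerInc U R \<rho> A"
  have "?L \<subseteq> lowerInc U R \<rho> (upperInc U R \<rho> ?L)"
    by (rule lowerInc_maximal[OF upperInc_superset openin_lowerInc increasing_lowerInc])
  then show ?thesis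
    unfolding alphaInc_def using lowerInc_subset by (rule Int_greatest[rotated])
qed

lemma lowerDec_subset_alphaDec: "lowerDec U R \<rho> A \<subseteq> alphaDec U R \<rho> A"
proof -
  let ?L = "lowerDec U R \<rho> A"
  have "?L \<subseteq> lowerDec U R \<rho> (upperDec U R \<rho> ?L)"
    by (rule lowerDec_maximal[OF upperDec_superset openin_lowerDec decreasing_lowerDec])
  then show ?thesis
    unfolding alphaDec_def using lowerDec_subset by (rule Int_greatest[rotated])
qed

lemma alphaInc_subset_SInc: "alphaInc U R \<rho> A \<subseteq> SInc U R \<rho> A"
  unfolding alphaInc_def SInc_def by (rule Int_mono[OF order_refl lowerInc_subset])

lemma alphaDec_subset_SDec: "alphaDec U R \<rho> A \<subseteq> SDec U R \<rho> A"
  unfolding alphaDec_def SDec_def by (rule Int_mono[OF order_refl lowerDec_subset])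

theorem proposition3p12:
  assumes "GOTAS U R \<rho>" and "A \<subseteq> U"
  shows "lowerInc U R \<rho> A \<subseteq> alphaInc U R \<rho> A \<and> alphaInc U R \<rho> A \<subseteq> SInc U R \<rho> A
       \<and> lowerDec U R \<rho> A \<subseteq> alphaDec U R \<rho> A \<and> alphaDec U R \<rho> A \<subseteq> SDec U R \<rho> A"
  using lowerInc_subset_alphaInc alphaInc_subset_SInc
        lowerDec_subset_alphaDec alphaDec_subset_SDec
  by (intro conjI)

end
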